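(* (i) The locus of the incenter $X_1$ (triangle center function $h\equiv 1$) over the 3-periodics of $E$ is the ellipse $x^2/a_1^2+y^2/b_1^2=1$ with $a_1=\dfrac{\delta-b^2}{a}$, $b_1=\dfrac{a^2-\delta}{b}$. (ii) The set of all excenters of all 3-periodics of $E$ is the ellipse $x^2/a_e^2+y^2/b_e^2=1$ with $a_e=\dfrac{b^2+\delta}{a}$, $b_e=\dfrac{a^2+\delta}{b}$.
   Context: Fix real numbers $a>b>0$, let $E$ be the ellipse $x^2/a^2+y^2/b^2=1$ and $\delta=\sqrt{a^4-a^2b^2+b^4}$. A 3-periodic is a non-degenerate triangle $P_1P_2P_3$ with all vertices on $E$ such that at each vertex $P_j$ the normal line to $E$ at $P_j$ bisects the interior angle of the triangle at $P_j$. For a triangle let $s_1=|P_2P_3|$, $s_2=|P_3P_1|$, $s_3=|P_1P_2|$. The point with trilinear coordinates $p:q:r$ is the Cartesian point $\dfrac{p s_1P_1+q s_2P_2+r s_3P_3}{p s_1+q s_2+r s_3}$. The incenter has trilinears $1:1:1$; the three excenters have trilinears $-1:1:1$, $1:-1:1$, $1:1:-1$. The locus of a center is the set of its positions over all 3-periodics. *)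

theory Defs
  imports "HOL-Analysis.Analysis"
begin

type_synonym pt = "real \<times> real"

definition on_ellipse :: "real \<Rightarrow> real \<Rightarrow> pt \<Rightarrow> bool" where
  "on_ellipse a b P \<longleftrightarrow> (fst P)^2 / a^2 + (snd P)^2 / b^2 = 1"

definition cross2 :: "pt \<Rightarrow> pt \<Rightarrow> real" where
  "cross2 u v = fst u * snd v - snd u * fst v"

definition ell_normal :: "real \<Rightarrow> real \<Rightarrow> pt \<Rightarrow> pt" where
  "ell_normal a b P = (fst P / a^2, snd P / b^2)"

definition non_degenerate :: "pt \<Rightarrow> pt \<Rightarrow> pt \<Rightarrow> bool" where
  "non_degenerate P1 P2 P3 \<longleftrightarrow> cross2 (P2 - P1) (P3 - P1) \<noteq> 0"

(* the internal angle bisector at P (of the angle between rays P->Q and P->R)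
   has direction (Q-P)/|Q-P| + (R-P)/|R-P|; the normal line at P bisects the
   interior angle iff this direction is parallel to the normal *)
definition normal_bisects :: "real \<Rightarrow> real \<Rightarrow> pt \<Rightarrow> pt \<Rightarrow> pt \<Rightarrow> bool" where
  "normal_bisects a b P Q R \<longleftrightarrow>
     cross2 ((Q - P) /\<^sub>R norm (Q - P) + (R - P) /\<^sub>R norm (R - P)) (ell_normal a b P) = 0"

definition three_periodic :: "real \<Rightarrow> real \<Rightarrow> pt \<Rightarrow> pt \<Rightarrow> pt \<Rightarrow> bool" where
  "three_periodic a b P1 P2 P3 \<longleftrightarrow>
     non_degenerate P1 P2 P3 \<and>
     on_ellipse a b P1 \<and> on_ellipse a b P2 \<and> on_ellipse a b P3 \<and>
     normal_bisects a b P1 P2 P3 \<and> normal_bisects a b P2 P3 P1 \<and>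
     normal_bisects a b P3 P1 P2"

definition trilinear_point :: "real \<Rightarrow> real \<Rightarrow> real \<Rightarrow> pt \<Rightarrow> pt \<Rightarrow> pt \<Rightarrow> pt" where
  "trilinear_point p q r P1 P2 P3 =
     (let s1 = dist P2 P3; s2 = dist P3 P1; s3 = dist P1 P2 in
      (1 / (p * s1 + q * s2 + r * s3)) *\<^sub>R
        ((p * s1) *\<^sub>R P1 + (q * s2) *\<^sub>R P2 + (r * s3) *\<^sub>R P3))"

definition incenter :: "pt \<Rightarrow> pt \<Rightarrow> pt \<Rightarrow> pt" where
  "incenter = trilinear_point 1 1 1"

definition excenters :: "pt \<Rightarrow> pt \<Rightarrow> pt \<Rightarrow> pt set" where
  "excenters P1 P2 P3 = {trilinear_point (-1) 1 1 P1 P2 P3,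
                         trilinear_point 1 (-1) 1 P1 P2 P3,
                         trilinear_point 1 1 (-1) P1 P2 P3}"

definition ellipse_set :: "real \<Rightarrow> real \<Rightarrow> pt set" where
  "ellipse_set A B = {P. on_ellipse A B P}"

end

theory Submission
  imports Defs
begin

text \<open>
  Write the vertices as (a x_i, b y_i) with x_i^2 + y_i^2 = 1. The normal at P_i bisects the angle
  at P_i iff (1 - x_i x_j - y_i y_j) / |P_i P_j| has the same value for both neighbours j, so a
  triangle is 3-periodic iff this ratio c is the same on all three sides. Squaring, every side then
  satisfies p' x_i x_j + q' y_i y_j = r' with p' + q' = 2, and three distinct unit vectors can share
  such a relation only if 2 r' + p' q' = 0. This determines c, and shows that the 3-periodics are
  exactly the triangles whose vertices are pairwise conjugate: p x_i x_j + q y_i y_j = - p q / 2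
  with p = 2 (a^2 - delta) / (a^2 - b^2) and q = 2 (delta - b^2) / (a^2 - b^2).

  The incenter is the intersection of the normals at P_1 and P_2, and conjugacy of P_1 and P_2
  places it on the first ellipse. The excenter opposite P_1 is the intersection of the tangents at
  P_2 and P_3, which by conjugacy is (- 2 a x_1 / q, - 2 b y_1 / p). Conversely every unit vector
  has two conjugate partners completing it to a 3-periodic: this inverts the excenter map directly,
  and an intermediate value argument on one coordinate, with the reflection y \<mapsto> - y, covers the
  incenter ellipse.
\<close>

section \<open>Angle bisectors in the plane\<close>

lemma cross2_scaleR_left [simp]: "cross2 (c *\<^sub>R u) v = c * cross2 u v"
  and cross2_scaleR_right [simp]: "cross2 u (c *\<^sub>R v) = c * cross2 u v"
  by (simp_all add: cross2_def algebra_simps)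

lemma cross2_self [simp]: "cross2 u u = 0"
  and cross2_zero_left [simp]: "cross2 0 u = 0"
  and cross2_zero_right [simp]: "cross2 u 0 = 0"
  by (simp_all add: cross2_def)

lemma cross2_inner_identity:
  fixes s t n :: pt
  shows "inner s t * inner s n + cross2 s t * cross2 s n = inner s s * inner t n"
  by (cases s; cases t; cases n) (simp add: cross2_def algebra_simps)

lemma cross2_unit_sum_eq_0_iff:
  fixes u w n :: pt
  assumes "norm u = 1" "norm w = 1" "cross2 u w \<noteq> 0"
  shows "cross2 (u + w) n = 0 \<longleftrightarrow> inner u n = inner w n"
proof -
  have orth: "inner (u + w) (u - w) = 0"
    using assms(1,2) by (simp add: algebra_simps inner_commute flip: power2_norm_eq_inner)
  have cr: "cross2 (u + w) (u - w) = -2 * cross2 u w"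
    by (simp add: cross2_def algebra_simps)
  then have "u + w \<noteq> 0" using assms(3) by auto
  then have "inner (u + w) (u + w) \<noteq> 0" by simp
  moreover have "cross2 (u + w) (u - w) * cross2 (u + w) n = inner (u + w) (u + w) * inner (u - w) n"
    using cross2_inner_identity[of "u + w" "u - w" n] orth by simp
  ultimately show ?thesis using cr assms(3) by (auto simp: inner_diff_left)
qed

lemma cross2_bisector_eq_0_iff:
  fixes v w n :: pt
  assumes "cross2 v w \<noteq> 0"
  shows "cross2 (v /\<^sub>R norm v + w /\<^sub>R norm w) n = 0
    \<longleftrightarrow> inner v n * norm w = inner w n * norm v"
proof -
  have "v \<noteq> 0" "w \<noteq> 0" using assms by (auto simp: cross2_def)
  then have pos: "0 < norm v" "0 < norm w" by simp_all
  have "cross2 (v /\<^sub>R norm v) (w /\<^sub>R norm w) \<noteq> 0" using assms pos by simp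
  then have "cross2 (v /\<^sub>R norm v + w /\<^sub>R norm w) n = 0
      \<longleftrightarrow> inner (v /\<^sub>R norm v) n = inner (w /\<^sub>R norm w) n"
    using pos by (intro cross2_unit_sum_eq_0_iff) simp_all
  also have "\<dots> \<longleftrightarrow> inner v n * norm w = inner w n * norm v"
    using pos by (simp add: field_simps)
  finally show ?thesis .
qed

lemma normal_bisects_iff_inner:
  assumes "non_degenerate P Q R"
  shows "normal_bisects a b P Q R \<longleftrightarrow>
    inner (Q - P) (ell_normal a b P) * dist P R = inner (R - P) (ell_normal a b P) * dist P Q"
proof -
  have dists: "dist P R = norm (R - P)" "dist P Q = norm (Q - P)"
    by (simp_all add: dist_norm norm_minus_commute)
  show ?thesis
    unfolding normal_bisects_def dists
    using assms unfolding non_degenerate_def by (rule cross2_bisector_eq_0_iff)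
qed

lemma normal_bisects_swap: "normal_bisects a b P Q R \<longleftrightarrow> normal_bisects a b P R Q"
  by (simp add: normal_bisects_def add.commute)

lemma non_degenerate_rotate: "non_degenerate P1 P2 P3 \<longleftrightarrow> non_degenerate P2 P3 P1"
proof -
  have "cross2 (P3 - P2) (P1 - P2) = cross2 (P2 - P1) (P3 - P1)"
    by (simp add: cross2_def algebra_simps)
  then show ?thesis by (simp add: non_degenerate_def)
qed

lemma non_degenerate_swap: "non_degenerate P1 P2 P3 \<longleftrightarrow> non_degenerate P1 P3 P2"
proof -
  have "cross2 (P3 - P1) (P2 - P1) = - cross2 (P2 - P1) (P3 - P1)"
    by (simp add: cross2_def algebra_simps)
  then show ?thesis by (simp add: non_degenerate_def)
qed

lemma non_degenerate_distinct:
  assumes "non_degenerate P Q R"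
  shows "P \<noteq> Q" "P \<noteq> R" "Q \<noteq> R"
  using assms unfolding non_degenerate_def by (auto simp: cross2_def)

lemma dist_less_of_non_degenerate:
  assumes "non_degenerate P Q R"
  shows "dist Q R < dist P Q + dist P R"
proof -
  have "norm ((P - Q) + (R - P)) \<noteq> norm (P - Q) + norm (R - P)"
  proof
    assume "norm ((P - Q) + (R - P)) = norm (P - Q) + norm (R - P)"
    then have "norm (P - Q) *\<^sub>R (R - P) = norm (R - P) *\<^sub>R (P - Q)"
      by (simp only: norm_triangle_eq)
    then have "norm (P - Q) * cross2 (P - Q) (R - P) = 0"
      by (metis cross2_scaleR_right cross2_self mult_zero_right)
    moreover have "cross2 (P - Q) (R - P) \<noteq> 0" "P - Q \<noteq> 0"
      using assms non_degenerate_distinct[OF assms] unfolding non_degenerate_def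
      by (auto simp: cross2_def algebra_simps)
    ultimately show False by simp
  qed
  moreover have "norm ((P - Q) + (R - P)) \<le> norm (P - Q) + norm (R - P)"
    by (rule norm_triangle_ineq)
  ultimately show ?thesis by (simp add: dist_norm norm_minus_commute)
qed

lemma trilinear_point_rotate:
  "trilinear_point p q r P1 P2 P3 = trilinear_point q r p P2 P3 P1"
  unfolding trilinear_point_def Let_def by (simp add: add_ac)

lemma trilinear_point_swap:
  "trilinear_point p q r P1 P2 P3 = trilinear_point p r q P1 P3 P2"
  unfolding trilinear_point_def Let_def by (simp add: add_ac dist_commute)

lemma barycentric_minus_vertex:
  fixes P Q R :: pt
  assumes "s1 + s2 + s3 \<noteq> 0"
  shows "(1 / (s1 + s2 + s3)) *\<^sub>R (s1 *\<^sub>R P + s2 *\<^sub>R Q + s3 *\<^sub>R R) - P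
    = (1 / (s1 + s2 + s3)) *\<^sub>R (s2 *\<^sub>R (Q - P) + s3 *\<^sub>R (R - P))"
  using assms by (cases P; cases Q; cases R) (simp add: field_simps)

lemma incenter_on_bisector:
  assumes nd: "non_degenerate P Q R"
    and bis: "cross2 ((Q - P) /\<^sub>R norm (Q - P) + (R - P) /\<^sub>R norm (R - P)) n = 0"
  shows "cross2 (incenter P Q R - P) n = 0"
proof -
  define v where "v = Q - P"
  define w where "w = R - P"
  define S where "S = dist Q R + dist R P + dist P Q"
  have pos: "0 < norm v" "0 < norm w" "0 < S"
    using non_degenerate_distinct[OF nd] by (auto simp: v_def w_def S_def add_pos_pos)
  have "incenter P Q R - P = (1 / S) *\<^sub>R (dist R P *\<^sub>R v + dist P Q *\<^sub>R w)"
    unfolding incenter_def trilinear_point_def Let_def S_def v_def w_def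
    using pos(3) by (simp add: barycentric_minus_vertex S_def)
  then have "S *\<^sub>R (incenter P Q R - P) = norm w *\<^sub>R v + norm v *\<^sub>R w"
    using pos(3) by (simp add: v_def w_def dist_norm norm_minus_commute)
  also have "\<dots> = (norm v * norm w) *\<^sub>R (v /\<^sub>R norm v + w /\<^sub>R norm w)"
    using pos by (simp add: scaleR_add_right field_simps)
  finally have "S * cross2 (incenter P Q R - P) n
      = norm v * norm w * cross2 (v /\<^sub>R norm v + w /\<^sub>R norm w) n"
    by (metis cross2_scaleR_left)
  then show ?thesis using bis pos unfolding v_def w_def by simp
qed

lemma excenter_on_external_bisector:
  assumes nd: "non_degenerate P1 P2 P3"
    and bis: "cross2 ((P3 - P2) /\<^sub>R norm (P3 - P2) + (P1 - P2) /\<^sub>R norm (P1 - P2)) n = 0"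
  shows "inner (trilinear_point (-1) 1 1 P1 P2 P3 - P2) n = 0"
proof -
  define v where "v = P3 - P2"
  define w where "w = P1 - P2"
  define D where "D = - dist P2 P3 + dist P3 P1 + dist P1 P2"
  have D: "0 < D" using dist_less_of_non_degenerate[OF nd] by (simp add: D_def dist_commute)
  have nz: "v \<noteq> 0" "w \<noteq> 0" "cross2 v w \<noteq> 0"
    using nd non_degenerate_distinct[OF nd] unfolding non_degenerate_def v_def w_def
    by (auto simp: cross2_def algebra_simps)
  have "trilinear_point (-1) 1 1 P1 P2 P3 - P2 = (1 / D) *\<^sub>R (norm w *\<^sub>R v - norm v *\<^sub>R w)"
    using barycentric_minus_vertex[of "dist P3 P1" "dist P1 P2" "- dist P2 P3" P2 P3 P1] D
    unfolding trilinear_point_def Let_def D_def v_def w_def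
    by (simp add: add_ac dist_norm norm_minus_commute algebra_simps)
  moreover
  \<comment> \<open>s is parallel to n and orthogonal to |w| v - |v| w, the direction of the excenter from P2\<close>
  define s where "s = norm w *\<^sub>R v + norm v *\<^sub>R w"
  have "s = (norm v * norm w) *\<^sub>R (v /\<^sub>R norm v + w /\<^sub>R norm w)"
    using nz by (simp add: s_def scaleR_add_right field_simps)
  then have "cross2 s n = 0" using bis by (simp add: v_def w_def)
  moreover have "inner s (norm w *\<^sub>R v - norm v *\<^sub>R w) = 0"
    by (simp add: s_def inner_diff_right inner_commute[of w v] algebra_simps flip: power2_norm_eq_inner)
      (simp add: power2_eq_square)
  moreover have "s \<noteq> 0"
  proof
    assume "s = 0"
    then have "cross2 v s = 0" by simp
    then show False using nz by (simp add: s_def cross2_def algebra_simps)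
  qed
  ultimately show ?thesis
    using cross2_inner_identity[of s "norm w *\<^sub>R v - norm v *\<^sub>R w" n] by simp
qed

section \<open>Points of the ellipse in circle coordinates\<close>

lemma on_ellipse_stretch:
  assumes "a \<noteq> 0" "b \<noteq> 0"
  shows "on_ellipse a b (a * x, b * y) \<longleftrightarrow> x^2 + y^2 = 1"
  using assms by (simp add: on_ellipse_def power_mult_distrib)

lemma on_ellipse_obtain_stretch:
  assumes "a \<noteq> 0" "b \<noteq> 0" "on_ellipse a b P"
  obtains x y where "P = (a * x, b * y)" "x^2 + y^2 = 1"
proof
  show "P = (a * (fst P / a), b * (snd P / b))" using assms by (simp add: prod_eq_iff)
  show "(fst P / a)^2 + (snd P / b)^2 = 1" using assms(3) by (simp add: on_ellipse_def power_divide)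
qed

lemma non_degenerate_stretch:
  assumes "a \<noteq> 0" "b \<noteq> 0"
  shows "non_degenerate (a * x1, b * y1) (a * x2, b * y2) (a * x3, b * y3)
    \<longleftrightarrow> (x2 - x1) * (y3 - y1) - (y2 - y1) * (x3 - x1) \<noteq> 0"
proof -
  have "cross2 ((a * x2, b * y2) - (a * x1, b * y1)) ((a * x3, b * y3) - (a * x1, b * y1))
      = a * b * ((x2 - x1) * (y3 - y1) - (y2 - y1) * (x3 - x1))"
    by (simp add: cross2_def algebra_simps)
  then show ?thesis using assms by (simp add: non_degenerate_def)
qed

lemma inner_ellipse_normal_stretch:
  assumes "a \<noteq> 0" "b \<noteq> 0"
  shows "inner ((X, Y) - (a * x, b * y)) (ell_normal a b (a * x, b * y)) = X * x / a + Y * y / b - (x^2 + y^2)"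
  using assms by (simp add: ell_normal_def field_simps power2_eq_square)

lemma cross2_ellipse_normal_stretch:
  assumes "a \<noteq> 0" "b \<noteq> 0"
  shows "cross2 ((X, Y) - (a * x, b * y)) (ell_normal a b (a * x, b * y)) = 0
    \<longleftrightarrow> a * X * y - b * Y * x = (a^2 - b^2) * x * y"
proof -
  have "a * b * cross2 ((X, Y) - (a * x, b * y)) (ell_normal a b (a * x, b * y))
      = a * X * y - b * Y * x - (a^2 - b^2) * x * y"
    using assms by (simp add: cross2_def ell_normal_def field_simps power2_eq_square)
  then show ?thesis using assms by auto
qed

lemma dist_stretch_sq:
  assumes "x1^2 + y1^2 = 1" "x2^2 + y2^2 = 1"
  shows "(dist (a * x1, b * y1) (a * x2, b * y2))^2
    = (1 - x1 * x2 - y1 * y2) * (a^2 + b^2 - (a^2 - b^2) * (x1 * x2 - y1 * y2))"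
  using assms by (simp add: dist_Pair_Pair dist_real_def) algebra

lemma unit_gap_pos:
  fixes x1 y1 x2 y2 :: real
  assumes "x1^2 + y1^2 = 1" "x2^2 + y2^2 = 1" "(x1, y1) \<noteq> (x2, y2)"
  shows "0 < 1 - x1 * x2 - y1 * y2"
proof -
  have "1 - x1 * x2 - y1 * y2 = ((x1 - x2)^2 + (y1 - y2)^2) / 2" using assms(1,2) by algebra
  moreover have "(x1 - x2)^2 + (y1 - y2)^2 \<noteq> 0" using assms(3) by auto
  then have "0 < (x1 - x2)^2 + (y1 - y2)^2" by (simp add: order_less_le)
  ultimately show ?thesis by simp
qed

lemma normal_bisects_stretch_iff:
  assumes "a \<noteq> 0" "b \<noteq> 0" "x1^2 + y1^2 = 1"
    and "non_degenerate (a * x1, b * y1) (a * x2, b * y2) (a * x3, b * y3)"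
  shows "normal_bisects a b (a * x1, b * y1) (a * x2, b * y2) (a * x3, b * y3) \<longleftrightarrow>
    (1 - x1 * x2 - y1 * y2) * dist (a * x1, b * y1) (a * x3, b * y3)
      = (1 - x1 * x3 - y1 * y3) * dist (a * x1, b * y1) (a * x2, b * y2)"
proof -
  have inner_gap: "inner ((a * x, b * y) - (a * x1, b * y1)) (ell_normal a b (a * x1, b * y1))
      = - (1 - x1 * x - y1 * y)" for x y
    using inner_ellipse_normal_stretch[OF assms(1,2), of "a * x" "b * y" x1 y1] assms(1-3)
    by (simp add: algebra_simps)
  show ?thesis
    unfolding normal_bisects_iff_inner[OF assms(4)] inner_gap mult_minus_left neg_equal_iff_equal ..
qed

lemma three_periodic_rotate: "three_periodic a b P1 P2 P3 \<Longrightarrow> three_periodic a b P2 P3 P1"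
  unfolding three_periodic_def using non_degenerate_rotate by blast

lemma three_periodic_obtain_stretch:
  assumes "0 < b" "b < a" "three_periodic a b P1 P2 P3"
  obtains x1 y1 x2 y2 x3 y3 where "P1 = (a * x1, b * y1)" "P2 = (a * x2, b * y2)" "P3 = (a * x3, b * y3)"
    "x1^2 + y1^2 = 1" "x2^2 + y2^2 = 1" "x3^2 + y3^2 = 1"
proof -
  have ab0: "a \<noteq> 0" "b \<noteq> 0" using assms(1,2) by auto
  have "on_ellipse a b P1" "on_ellipse a b P2" "on_ellipse a b P3"
    using assms(3) by (simp_all add: three_periodic_def)
  then show ?thesis using that on_ellipse_obtain_stretch[OF ab0] by metis
qed

lemma conic_of_gap_eq_ratio_dist:
  fixes x1 y1 x2 y2 c :: real
  assumes "x1^2 + y1^2 = 1" "x2^2 + y2^2 = 1" "(x1, y1) \<noteq> (x2, y2)"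
    and "1 - x1 * x2 - y1 * y2 = c * dist (a * x1, b * y1) (a * x2, b * y2)"
  shows "(1 - c^2 * (a^2 - b^2)) * x1 * x2 + (1 + c^2 * (a^2 - b^2)) * y1 * y2 = 1 - c^2 * (a^2 + b^2)"
proof -
  define g where "g = 1 - x1 * x2 - y1 * y2"
  define K where "K = a^2 + b^2 - (a^2 - b^2) * (x1 * x2 - y1 * y2)"
  have "g * g = g * (c^2 * K)"
    using arg_cong[OF assms(4), of "\<lambda>t. t^2"] dist_stretch_sq[OF assms(1,2)]
    by (simp add: g_def K_def power_mult_distrib power2_eq_square)
  then have "g = c^2 * K" using unit_gap_pos[OF assms(1-3)] by (simp add: g_def)
  then show ?thesis by (simp add: g_def K_def) algebra
qed

lemma conic_level_constraint:
  fixes p q r x1 y1 x2 y2 x3 y3 :: real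
  assumes "x1^2 + y1^2 = 1" "x2^2 + y2^2 = 1" "x3^2 + y3^2 = 1" "p + q = 2"
    and "p * x1 * x2 + q * y1 * y2 = r" "p * x1 * x3 + q * y1 * y3 = r" "p * x2 * x3 + q * y2 * y3 = r"
  shows "(2 * r + p * q) * (p * x1^2 + q * y1^2 - r) * (p^2 * x1^2 + q^2 * y1^2)
    * ((x2 - x3)^2 + (y2 - y3)^2) = 0"
  using assms by algebra

lemma unit_circle_non_collinear:
  fixes x1 y1 x2 y2 x3 y3 :: real
  assumes "x1^2 + y1^2 = 1" "x2^2 + y2^2 = 1" "x3^2 + y3^2 = 1"
    and "(x1, y1) \<noteq> (x2, y2)" "(x1, y1) \<noteq> (x3, y3)" "(x2, y2) \<noteq> (x3, y3)"
  shows "(x2 - x1) * (y3 - y1) - (y2 - y1) * (x3 - x1) \<noteq> 0"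
proof
  assume "(x2 - x1) * (y3 - y1) - (y2 - y1) * (x3 - x1) = 0"
  moreover have "4 * ((x2 - x1) * (y3 - y1) - (y2 - y1) * (x3 - x1))^2
      = ((x1 - x2)^2 + (y1 - y2)^2) * ((x2 - x3)^2 + (y2 - y3)^2) * ((x3 - x1)^2 + (y3 - y1)^2)"
    using assms(1-3) by algebra
  ultimately show False using assms(4-6) by auto
qed

text \<open>For h = \<plusminus> sqrt (c1^2 + c2^2 - r^2) these are the two points where the line
  c1 X + c2 Y = r meets the unit circle.\<close>

definition chord_point :: "real \<Rightarrow> real \<Rightarrow> real \<Rightarrow> real \<Rightarrow> pt" where
  "chord_point c1 c2 r h = ((r * c1 - h * c2) / (c1^2 + c2^2), (r * c2 + h * c1) / (c1^2 + c2^2))"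

lemma chord_point_on_line:
  assumes "c1^2 + c2^2 \<noteq> 0"
  shows "c1 * fst (chord_point c1 c2 r h) + c2 * snd (chord_point c1 c2 r h) = r"
proof -
  have "c1 * (r * c1 - h * c2) + c2 * (r * c2 + h * c1) = r * (c1^2 + c2^2)" by algebra
  then show ?thesis using assms by (simp add: chord_point_def add_divide_distrib[symmetric])
qed

lemma chord_point_on_circle:
  assumes "c1^2 + c2^2 \<noteq> 0" "h^2 = c1^2 + c2^2 - r^2"
  shows "(fst (chord_point c1 c2 r h))^2 + (snd (chord_point c1 c2 r h))^2 = 1"
proof -
  have "(r * c1 - h * c2)^2 + (r * c2 + h * c1)^2 = (c1^2 + c2^2)^2"
    using assms(2) by algebra
  then show ?thesis using assms(1) by (simp add: chord_point_def power_divide add_divide_distrib[symmetric])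
qed

section \<open>Conjugate vertices\<close>

definition ell_delta :: "real \<Rightarrow> real \<Rightarrow> real" where
  "ell_delta a b = sqrt (a^4 - a^2 * b^2 + b^4)"

definition conj_p :: "real \<Rightarrow> real \<Rightarrow> real" where
  "conj_p a b = 2 * (a^2 - ell_delta a b) / (a^2 - b^2)"

definition conj_q :: "real \<Rightarrow> real \<Rightarrow> real" where
  "conj_q a b = 2 * (ell_delta a b - b^2) / (a^2 - b^2)"

text \<open>The positive root c of (a^2 - b^2)^2 c^4 + 2 (a^2 + b^2) c^2 = 3.\<close>

definition bisector_ratio :: "real \<Rightarrow> real \<Rightarrow> real" where
  "bisector_ratio a b = sqrt (2 * ell_delta a b - (a^2 + b^2)) / (a^2 - b^2)"

lemma ell_delta_facts:
  fixes a b :: real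
  assumes "0 < b" "b < a"
  shows "(ell_delta a b)^2 = a^4 - a^2 * b^2 + b^4"
    and "b^2 < ell_delta a b" "ell_delta a b < a^2" "a^2 + b^2 < 2 * ell_delta a b"
proof -
  have ab: "b^2 < a^2" using assms by (simp add: power_strict_mono)
  have eq: "a^4 - a^2 * b^2 + b^4 = a^2 * (a^2 - b^2) + b^4" by algebra
  have radicand: "0 \<le> a^4 - a^2 * b^2 + b^4" unfolding eq using ab by simp
  then show sq: "(ell_delta a b)^2 = a^4 - a^2 * b^2 + b^4"
    unfolding ell_delta_def by simp
  have nonneg: "0 \<le> ell_delta a b" using radicand by (simp add: ell_delta_def)
  have "(ell_delta a b)^2 - (b^2)^2 = a^2 * (a^2 - b^2)" unfolding sq by algebra
  moreover have "0 < a^2 * (a^2 - b^2)" using ab assms by simp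
  ultimately have "(b^2)^2 < (ell_delta a b)^2" by linarith
  then show "b^2 < ell_delta a b" using nonneg power_less_imp_less_base by blast
  have "(a^2)^2 - (ell_delta a b)^2 = b^2 * (a^2 - b^2)" unfolding sq by algebra
  moreover have "0 < b^2 * (a^2 - b^2)" using ab assms by simp
  ultimately have "(ell_delta a b)^2 < (a^2)^2" by linarith
  then show "ell_delta a b < a^2" using power_less_imp_less_base by fastforce
  have "(a^2 + b^2)^2 < (2 * ell_delta a b)^2"
  proof -
    have "(2 * ell_delta a b)^2 - (a^2 + b^2)^2 = 3 * (a^2 - b^2)^2"
      by (simp add: power_mult_distrib sq) algebra
    moreover have "0 < 3 * (a^2 - b^2)^2" using ab by simp
    ultimately show ?thesis by linarith
  qed
  then show "a^2 + b^2 < 2 * ell_delta a b" using nonneg power_less_imp_less_base by fastforce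
qed

lemma
  fixes a b :: real
  assumes "0 < b" "b < a"
  defines "p \<equiv> conj_p a b" and "q \<equiv> conj_q a b" and "c \<equiv> bisector_ratio a b"
  shows conj_pq_pos: "0 < p" "0 < q"
    and conj_p_add_q: "p + q = 2"
    and bisector_ratio_pos: "0 < c"
    and bisector_ratio_conj: "1 - c^2 * (a^2 - b^2) = p" "1 + c^2 * (a^2 - b^2) = q"
      "1 - c^2 * (a^2 + b^2) = -(p * q / 2)"
proof -
  define d where "d = ell_delta a b"
  define e where "e = a^2 - b^2"
  note d = ell_delta_facts[OF assms(1,2), folded d_def]
  have e: "0 < e" using assms by (simp add: e_def power_strict_mono)
  have p: "p = 2 * (a^2 - d) / e" and q: "q = 2 * (d - b^2) / e"
    by (simp_all add: p_def q_def conj_p_def conj_q_def d_def e_def)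
  have c2: "c^2 = (2 * d - (a^2 + b^2)) / e^2"
    using d(4) by (simp add: c_def bisector_ratio_def d_def e_def power_divide)
  show "0 < p" "0 < q" "0 < c" using d e
    by (simp_all add: p q c_def bisector_ratio_def d_def[symmetric] e_def[symmetric])
  have "p + q = 2 * e / e" by (simp add: p q e_def add_divide_distrib[symmetric] algebra_simps)
  then show "p + q = 2" using e by simp
  have "c^2 * (a^2 - b^2) = (2 * d - (a^2 + b^2)) / e^2 * e"
    unfolding c2 e_def ..
  then have ce: "c^2 * (a^2 - b^2) = (2 * d - (a^2 + b^2)) / e"
    using e by (simp add: power2_eq_square)
  show "1 - c^2 * (a^2 - b^2) = p" "1 + c^2 * (a^2 - b^2) = q"
    using e by (simp_all add: ce p q field_simps) (simp_all add: e_def)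
  have key: "e^2 - (2 * d - (a^2 + b^2)) * (a^2 + b^2) = -2 * (a^2 - d) * (d - b^2)"
    unfolding e_def using d(1) by algebra
  have "1 - c^2 * (a^2 + b^2) = (e^2 - (2 * d - (a^2 + b^2)) * (a^2 + b^2)) / e^2"
    using e by (simp add: c2 field_simps)
  also have "\<dots> = -(p * q / 2)"
    unfolding key p q using e by (simp add: field_simps power2_eq_square)
  finally show "1 - c^2 * (a^2 + b^2) = -(p * q / 2)" .
qed

lemma locus_semi_axes:
  fixes a b :: real
  assumes "0 < b" "b < a"
  shows "(ell_delta a b - b^2) / a = conj_q a b * (a^2 - b^2) / (2 * a)"
    and "(a^2 - ell_delta a b) / b = conj_p a b * (a^2 - b^2) / (2 * b)"
    and "(b^2 + ell_delta a b) / a = 2 * a / conj_q a b"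
    and "(a^2 + ell_delta a b) / b = 2 * b / conj_p a b"
proof -
  define d where "d = ell_delta a b"
  have e: "0 < a^2 - b^2" using assms by (simp add: power_strict_mono)
  have d: "d^2 = a^4 - a^2 * b^2 + b^4" "b^2 < d" "d < a^2"
    using ell_delta_facts[OF assms] by (simp_all add: d_def)
  show "(ell_delta a b - b^2) / a = conj_q a b * (a^2 - b^2) / (2 * a)"
    "(a^2 - ell_delta a b) / b = conj_p a b * (a^2 - b^2) / (2 * b)"
    using e assms by (simp_all add: conj_p_def conj_q_def field_simps)
  have p: "conj_p a b = 2 * (a^2 - d) / (a^2 - b^2)" and q: "conj_q a b = 2 * (d - b^2) / (a^2 - b^2)"
    by (simp_all add: conj_p_def conj_q_def d_def)
  show "(b^2 + ell_delta a b) / a = 2 * a / conj_q a b"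
    unfolding q d_def[symmetric] using e d(2) assms by (simp add: field_simps) (use d(1) in algebra)
  show "(a^2 + ell_delta a b) / b = 2 * b / conj_p a b"
    unfolding p d_def[symmetric] using e d(3) assms by (simp add: field_simps) (use d(1) in algebra)
qed

definition periodic_pair :: "real \<Rightarrow> real \<Rightarrow> real \<Rightarrow> real \<Rightarrow> real \<Rightarrow> real \<Rightarrow> bool" where
  "periodic_pair a b x1 y1 x2 y2 \<longleftrightarrow>
     conj_p a b * x1 * x2 + conj_q a b * y1 * y2 = - (conj_p a b * conj_q a b / 2)"

lemma periodic_pair_reflect: "periodic_pair a b x1 (- y1) x2 (- y2) \<longleftrightarrow> periodic_pair a b x1 y1 x2 y2"
  by (simp add: periodic_pair_def)

lemma periodic_pair_gap_eq:
  fixes x1 y1 x2 y2 :: real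
  assumes "0 < b" "b < a" "x1^2 + y1^2 = 1" "x2^2 + y2^2 = 1" "periodic_pair a b x1 y1 x2 y2"
  shows "1 - x1 * x2 - y1 * y2 = bisector_ratio a b * dist (a * x1, b * y1) (a * x2, b * y2)"
proof -
  define c where "c = bisector_ratio a b"
  define K where "K = a^2 + b^2 - (a^2 - b^2) * (x1 * x2 - y1 * y2)"
  note ratio = bisector_ratio_conj[OF assms(1,2), folded c_def]
  have "(x1 * x2 - y1 * y2)^2 + (x1 * y2 + y1 * x2)^2 = 1" using assms(3,4) by algebra
  then have "\<bar>x1 * x2 - y1 * y2\<bar> \<le> 1" by (metis abs_square_le_1 le_add_same_cancel1 zero_le_power2)
  moreover have "b^2 < a^2" "0 < b^2" using assms(1,2) by (simp_all add: power_strict_mono)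
  ultimately have "(a^2 - b^2) * (x1 * x2 - y1 * y2) < a^2 + b^2"
    by (smt (verit) abs_le_iff mult_left_le)
  then have K: "0 < K" by (simp add: K_def)
  have "(1 - c^2 * (a^2 - b^2)) * x1 * x2 + (1 + c^2 * (a^2 - b^2)) * y1 * y2 = 1 - c^2 * (a^2 + b^2)"
    using assms(5) ratio by (simp add: periodic_pair_def)
  then have gap: "1 - x1 * x2 - y1 * y2 = c^2 * K" by (simp add: K_def) algebra
  then have "(dist (a * x1, b * y1) (a * x2, b * y2))^2 = (c * K)^2"
    unfolding dist_stretch_sq[OF assms(3,4)] by (simp add: K_def power2_eq_square)
  then have "dist (a * x1, b * y1) (a * x2, b * y2) = c * K"
    using bisector_ratio_pos[OF assms(1,2), folded c_def] K by (simp add: power2_eq_iff_nonneg)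
  then show ?thesis using gap by (simp add: c_def power2_eq_square)
qed

lemma periodic_pair_cross_ne_0:
  fixes x1 y1 x2 y2 :: real
  assumes "0 < b" "b < a" "x1^2 + y1^2 = 1" "x2^2 + y2^2 = 1" "periodic_pair a b x1 y1 x2 y2"
  shows "x1 * y2 - y1 * x2 \<noteq> 0"
proof
  assume cross: "x1 * y2 - y1 * x2 = 0"
  define p where "p = conj_p a b"
  define q where "q = conj_q a b"
  note pos = conj_pq_pos[OF assms(1,2), folded p_def q_def]
    and add = conj_p_add_q[OF assms(1,2), folded p_def q_def]
  define l where "l = x1 * x2 + y1 * y2"
  define X where "X = p * x1^2 + q * y1^2"
  define H where "H = p * q / 2"
  have "x2 = l * x1" "y2 = l * y1" using assms(3) cross by (simp_all add: l_def) algebra+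
  then have "l * X = - H"
    using assms(5) by (simp add: periodic_pair_def p_def q_def X_def H_def power2_eq_square algebra_simps)
  then have "l^2 * X^2 = H^2"
    by (metis power2_minus power_mult_distrib)
  moreover have "l^2 = 1" using assms(3,4) cross by (simp add: l_def) algebra
  ultimately have sq: "X^2 = H^2" by simp
  have "2 * X - 2 * H - (p^2 * x1^2 + q^2 * y1^2)
      = (2 - p - q) * X + p * q * (x1^2 + y1^2 - 1)"
    by (simp add: X_def H_def algebra_simps power2_eq_square)
  also have "\<dots> = 0" using add assms(3) by simp
  finally have "2 * X - 2 * H = p^2 * x1^2 + q^2 * y1^2" by simp
  moreover have "0 < p^2 * x1^2 + q^2 * y1^2"
    using assms(3) pos by (cases "x1 = 0") (auto intro: add_pos_nonneg add_nonneg_pos)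
  moreover have "0 < H" using pos by (simp add: H_def)
  ultimately have "H^2 < X^2" by (intro power_strict_mono) simp_all
  then show False using sq by simp
qed

lemma periodic_pairs_of_equal_ratios:
  fixes x1 y1 x2 y2 x3 y3 :: real
  assumes ab: "0 < b" "b < a" and u: "x1^2 + y1^2 = 1" "x2^2 + y2^2 = 1" "x3^2 + y3^2 = 1"
    and d: "(x1, y1) \<noteq> (x2, y2)" "(x1, y1) \<noteq> (x3, y3)" "(x2, y2) \<noteq> (x3, y3)"
    and r12: "1 - x1 * x2 - y1 * y2 = c * dist (a * x1, b * y1) (a * x2, b * y2)"
    and r13: "1 - x1 * x3 - y1 * y3 = c * dist (a * x1, b * y1) (a * x3, b * y3)"
    and r23: "1 - x2 * x3 - y2 * y3 = c * dist (a * x2, b * y2) (a * x3, b * y3)"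
  shows "periodic_pair a b x1 y1 x2 y2 \<and> periodic_pair a b x1 y1 x3 y3 \<and> periodic_pair a b x2 y2 x3 y3"
proof -
  define t where "t = c^2"
  define p' where "p' = 1 - t * (a^2 - b^2)"
  define q' where "q' = 1 + t * (a^2 - b^2)"
  define r' where "r' = 1 - t * (a^2 + b^2)"
  have e: "0 < a^2 - b^2" using ab by (simp add: power_strict_mono)
  have c: "0 < c"
    using r12 unit_gap_pos[OF u(1,2) d(1)] zero_le_dist[of "(a * x1, b * y1)" "(a * x2, b * y2)"]
    by (smt (verit) mult_nonpos_nonneg)
  then have t: "0 < t" by (simp add: t_def)
  have conics: "p' * x1 * x2 + q' * y1 * y2 = r'" "p' * x1 * x3 + q' * y1 * y3 = r'"
      "p' * x2 * x3 + q' * y2 * y3 = r'"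
    using conic_of_gap_eq_ratio_dist[OF u(1,2) d(1) r12] conic_of_gap_eq_ratio_dist[OF u(1,3) d(2) r13]
      conic_of_gap_eq_ratio_dist[OF u(2,3) d(3) r23]
    by (simp_all add: p'_def q'_def r'_def t_def)
  have "p' * x1^2 + q' * y1^2 - r' = t * (2 * a^2 * y1^2 + 2 * b^2 * x1^2)"
    unfolding p'_def q'_def r'_def using u(1) by algebra
  moreover have "0 < 2 * a^2 * y1^2 + 2 * b^2 * x1^2"
    using u(1) ab by (cases "x1 = 0") (auto intro: add_pos_nonneg add_nonneg_pos)
  ultimately have f1: "p' * x1^2 + q' * y1^2 - r' \<noteq> 0" using t by simp
  have f2: "p'^2 * x1^2 + q'^2 * y1^2 \<noteq> 0"
  proof
    assume "p'^2 * x1^2 + q'^2 * y1^2 = 0"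
    then have z: "p' * x1 = 0" "q' * y1 = 0" by (simp_all add: power_mult_distrib[symmetric])
    moreover have "0 < q'" using mult_pos_pos[OF t e] by (simp add: q'_def)
    ultimately have "y1 = 0" "p' = 0" using u(1) by auto
    then have "r' = 0" "t * (a^2 + b^2) = t * (a^2 - b^2)"
      using conics(1) z by (simp_all add: p'_def r'_def)
    then show False using t ab by simp
  qed
  have f3: "(x2 - x3)^2 + (y2 - y3)^2 \<noteq> 0" using d(3) by auto
  \<comment> \<open>three distinct points on one such conic force a quadratic equation for t\<close>
  have "p' + q' = 2" by (simp add: p'_def q'_def)
  then have "2 * r' + p' * q' = 0"
    using conic_level_constraint[OF u _ conics] f1 f2 f3 by auto
  then have "(a^2 - b^2)^2 * t^2 + 2 * (a^2 + b^2) * t - 3 = 0"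
    unfolding p'_def q'_def r'_def by algebra
  then have "((a^2 - b^2)^2 * t + (a^2 + b^2))^2 = (2 * ell_delta a b)^2"
    using ell_delta_facts(1)[OF ab] by algebra
  moreover have "0 \<le> (a^2 - b^2)^2 * t + (a^2 + b^2)" "0 \<le> 2 * ell_delta a b"
    using t ell_delta_facts(2)[OF ab] by (simp_all add: add_nonneg_nonneg)
      (smt (verit) zero_le_power2)
  ultimately have root: "(a^2 - b^2)^2 * t + (a^2 + b^2) = 2 * ell_delta a b"
    using power2_eq_iff_nonneg by blast
  have "(a^2 - b^2) * p' = 2 * (a^2 - ell_delta a b)" "(a^2 - b^2) * q' = 2 * (ell_delta a b - b^2)"
    unfolding p'_def q'_def using root by algebra+
  then have "p' = conj_p a b" "q' = conj_q a b"
    using e by (simp_all add: conj_p_def conj_q_def field_simps)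
  moreover have "r' = - (p' * q' / 2)" using \<open>2 * r' + p' * q' = 0\<close> by simp
  ultimately show ?thesis using conics by (simp add: periodic_pair_def)
qed

lemma three_periodic_stretch_iff:
  fixes x1 y1 x2 y2 x3 y3 :: real
  assumes ab: "0 < b" "b < a" and u: "x1^2 + y1^2 = 1" "x2^2 + y2^2 = 1" "x3^2 + y3^2 = 1"
  shows "three_periodic a b (a * x1, b * y1) (a * x2, b * y2) (a * x3, b * y3) \<longleftrightarrow>
    periodic_pair a b x1 y1 x2 y2 \<and> periodic_pair a b x1 y1 x3 y3 \<and> periodic_pair a b x2 y2 x3 y3"
    (is "three_periodic a b ?P1 ?P2 ?P3 \<longleftrightarrow> ?pairs")
proof -
  have ab0: "a \<noteq> 0" "b \<noteq> 0" using ab by auto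
  define g where "g = (\<lambda>x y x' y' :: real. 1 - x * x' - y * y')"
  have g_sym: "g x y x' y' = g x' y' x y" for x y x' y' by (simp add: g_def mult.commute)
  have bisectors: "three_periodic a b ?P1 ?P2 ?P3 \<longleftrightarrow> non_degenerate ?P1 ?P2 ?P3 \<and>
      g x1 y1 x2 y2 * dist ?P1 ?P3 = g x1 y1 x3 y3 * dist ?P1 ?P2 \<and>
      g x2 y2 x3 y3 * dist ?P2 ?P1 = g x2 y2 x1 y1 * dist ?P2 ?P3 \<and>
      g x3 y3 x1 y1 * dist ?P3 ?P2 = g x3 y3 x2 y2 * dist ?P3 ?P1"
    using normal_bisects_stretch_iff[OF ab0 u(1), of x2 y2 x3 y3]
      normal_bisects_stretch_iff[OF ab0 u(2), of x3 y3 x1 y1]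
      normal_bisects_stretch_iff[OF ab0 u(3), of x1 y1 x2 y2]
      non_degenerate_rotate[of ?P1 ?P2 ?P3] non_degenerate_rotate[of ?P2 ?P3 ?P1]
    unfolding three_periodic_def g_def by (auto simp: on_ellipse_stretch[OF ab0] u)
  show ?thesis
  proof
    assume tp: "three_periodic a b ?P1 ?P2 ?P3"
    then have nd: "non_degenerate ?P1 ?P2 ?P3" using bisectors by blast
    then have d: "(x1, y1) \<noteq> (x2, y2)" "(x1, y1) \<noteq> (x3, y3)" "(x2, y2) \<noteq> (x3, y3)"
      using non_degenerate_distinct[OF nd] by auto
    have d12: "0 < dist ?P1 ?P2" using non_degenerate_distinct[OF nd] by simp
    define c where "c = g x1 y1 x2 y2 / dist ?P1 ?P2"
    have ratios: "g x1 y1 x2 y2 = c * dist ?P1 ?P2" "g x1 y1 x3 y3 = c * dist ?P1 ?P3"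
      "g x2 y2 x3 y3 = c * dist ?P2 ?P3"
      using tp d12 unfolding bisectors c_def
      by (auto simp: field_simps dist_commute g_sym[of x2 y2 x1 y1])
    show ?pairs using periodic_pairs_of_equal_ratios[OF ab u d ratios[unfolded g_def]] .
  next
    assume pairs: ?pairs
    have "x1 * y2 - y1 * x2 \<noteq> 0" "x1 * y3 - y1 * x3 \<noteq> 0" "x2 * y3 - y2 * x3 \<noteq> 0"
      using pairs periodic_pair_cross_ne_0[OF ab] u by blast+
    then have "(x1, y1) \<noteq> (x2, y2)" "(x1, y1) \<noteq> (x3, y3)" "(x2, y2) \<noteq> (x3, y3)"
      by (auto simp: mult.commute)
    then have nd: "non_degenerate ?P1 ?P2 ?P3"
      using unit_circle_non_collinear[OF u] by (simp add: non_degenerate_stretch[OF ab0])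
    have "g x1 y1 x2 y2 = bisector_ratio a b * dist ?P1 ?P2"
      "g x1 y1 x3 y3 = bisector_ratio a b * dist ?P1 ?P3"
      "g x2 y2 x3 y3 = bisector_ratio a b * dist ?P2 ?P3"
      using pairs periodic_pair_gap_eq[OF ab] u unfolding g_def by blast+
    then show "three_periodic a b ?P1 ?P2 ?P3"
      unfolding bisectors using nd by (simp add: g_sym[of x2 y2 x1 y1] g_sym[of x3 y3]
        dist_commute[of ?P2 ?P1] dist_commute[of ?P3])
  qed
qed

section \<open>Incenter and excenters\<close>

definition normals_meet :: "real \<Rightarrow> real \<Rightarrow> real \<Rightarrow> real \<Rightarrow> real \<Rightarrow> real \<Rightarrow> pt" where
  "normals_meet a b x1 y1 x2 y2 =
     ((a^2 - b^2) * x1 * x2 * (y2 - y1) / (a * (x1 * y2 - y1 * x2)),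
      (a^2 - b^2) * y1 * y2 * (x2 - x1) / (b * (x1 * y2 - y1 * x2)))"

lemma normals_meet_unique:
  assumes "a \<noteq> 0" "b \<noteq> 0" "x1 * y2 - y1 * x2 \<noteq> 0"
    and "a * X * y1 - b * Y * x1 = (a^2 - b^2) * x1 * y1"
    and "a * X * y2 - b * Y * x2 = (a^2 - b^2) * x2 * y2"
  shows "(X, Y) = normals_meet a b x1 y1 x2 y2"
proof -
  have "a * X * (x1 * y2 - y1 * x2) = (a^2 - b^2) * x1 * x2 * (y2 - y1)"
    "b * Y * (x1 * y2 - y1 * x2) = (a^2 - b^2) * y1 * y2 * (x2 - x1)"
    using assms(4,5) by algebra+
  then show ?thesis using assms(1-3) by (simp add: normals_meet_def field_simps)
qed

lemma incenter_stretch: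
  fixes x1 y1 x2 y2 x3 y3 :: real
  assumes ab: "0 < b" "b < a" and u: "x1^2 + y1^2 = 1" "x2^2 + y2^2 = 1" "x3^2 + y3^2 = 1"
    and tp: "three_periodic a b (a * x1, b * y1) (a * x2, b * y2) (a * x3, b * y3)"
  shows "incenter (a * x1, b * y1) (a * x2, b * y2) (a * x3, b * y3) = normals_meet a b x1 y1 x2 y2"
proof -
  let ?P1 = "(a * x1, b * y1)" and ?P2 = "(a * x2, b * y2)" and ?P3 = "(a * x3, b * y3)"
  have ab0: "a \<noteq> 0" "b \<noteq> 0" using ab by auto
  obtain X Y where I: "incenter ?P1 ?P2 ?P3 = (X, Y)" by fastforce
  have nd: "non_degenerate ?P1 ?P2 ?P3" "non_degenerate ?P2 ?P3 ?P1"
    using tp non_degenerate_rotate unfolding three_periodic_def by blast+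
  have "cross2 ((X, Y) - ?P1) (ell_normal a b ?P1) = 0"
    using tp nd(1) incenter_on_bisector I unfolding three_periodic_def normal_bisects_def by metis
  then have l1: "a * X * y1 - b * Y * x1 = (a^2 - b^2) * x1 * y1"
    by (rule cross2_ellipse_normal_stretch[OF ab0, THEN iffD1])
  have "incenter ?P2 ?P3 ?P1 = (X, Y)"
    using I unfolding incenter_def by (simp add: trilinear_point_rotate[of 1 1 1 ?P1])
  then have "cross2 ((X, Y) - ?P2) (ell_normal a b ?P2) = 0"
    using tp nd(2) incenter_on_bisector unfolding three_periodic_def normal_bisects_def by metis
  then have l2: "a * X * y2 - b * Y * x2 = (a^2 - b^2) * x2 * y2"
    by (rule cross2_ellipse_normal_stretch[OF ab0, THEN iffD1])
  have "x1 * y2 - y1 * x2 \<noteq> 0"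
    using tp periodic_pair_cross_ne_0[OF ab u(1,2)] three_periodic_stretch_iff[OF ab u] by blast
  then show ?thesis unfolding I using normals_meet_unique[OF ab0 _ l1 l2] by blast
qed

lemma normals_meet_on_ellipse:
  fixes x1 y1 x2 y2 :: real
  assumes ab: "0 < b" "b < a" and u: "x1^2 + y1^2 = 1" "x2^2 + y2^2 = 1"
    and pair: "periodic_pair a b x1 y1 x2 y2"
  shows "on_ellipse (conj_q a b * (a^2 - b^2) / (2 * a)) (conj_p a b * (a^2 - b^2) / (2 * b))
           (normals_meet a b x1 y1 x2 y2)"
proof -
  define p where "p = conj_p a b"
  define q where "q = conj_q a b"
  define D where "D = x1 * y2 - y1 * x2"
  define e where "e = a^2 - b^2"
  note pos = conj_pq_pos[OF ab, folded p_def q_def]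
    and add = conj_p_add_q[OF ab, folded p_def q_def]
  have D: "D \<noteq> 0" using periodic_pair_cross_ne_0[OF ab u pair] by (simp add: D_def)
  have e: "0 < e" using ab by (simp add: e_def power_strict_mono)
  have G: "4 * p^2 * x1^2 * x2^2 * (y2 - y1)^2 + 4 * q^2 * y1^2 * y2^2 * (x2 - x1)^2 = p^2 * q^2 * D^2"
    using u add pair unfolding periodic_pair_def p_def[symmetric] q_def[symmetric] D_def
    by algebra
  have "(e * x1 * x2 * (y2 - y1) / (a * D))^2 / (q * e / (2 * a))^2
      + (e * y1 * y2 * (x2 - x1) / (b * D))^2 / (p * e / (2 * b))^2
      = (4 * p^2 * x1^2 * x2^2 * (y2 - y1)^2 + 4 * q^2 * y1^2 * y2^2 * (x2 - x1)^2) / (p^2 * q^2 * D^2)"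
    using ab pos D e by (simp add: field_simps power2_eq_square)
  also have "\<dots> = 1" using pos D by (simp add: G)
  finally show ?thesis
    unfolding on_ellipse_def normals_meet_def p_def[symmetric] q_def[symmetric] e_def[symmetric]
      D_def[symmetric]
    by simp
qed

lemma normals_meet_reflect:
  "normals_meet a b x1 (- y1) x2 (- y2)
    = (fst (normals_meet a b x1 y1 x2 y2), - snd (normals_meet a b x1 y1 x2 y2))"
proof -
  have "x1 * (- y2) - (- y1) * x2 = - (x1 * y2 - y1 * x2)" "- y2 - - y1 = - (y2 - y1)" by simp_all
  then show ?thesis
    unfolding normals_meet_def
    by (simp only: fst_conv snd_conv mult_minus_right mult_minus_left minus_divide_divide minus_minus)
      simp
qed

lemma excenter_stretch:
  fixes x1 y1 x2 y2 x3 y3 :: real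
  assumes ab: "0 < b" "b < a" and u: "x1^2 + y1^2 = 1" "x2^2 + y2^2 = 1" "x3^2 + y3^2 = 1"
    and tp: "three_periodic a b (a * x1, b * y1) (a * x2, b * y2) (a * x3, b * y3)"
  shows "trilinear_point (-1) 1 1 (a * x1, b * y1) (a * x2, b * y2) (a * x3, b * y3)
    = (- 2 * a * x1 / conj_q a b, - 2 * b * y1 / conj_p a b)"
proof -
  let ?P1 = "(a * x1, b * y1)" and ?P2 = "(a * x2, b * y2)" and ?P3 = "(a * x3, b * y3)"
  define p where "p = conj_p a b"
  define q where "q = conj_q a b"
  note pos = conj_pq_pos[OF ab, folded p_def q_def]
  have ab0: "a \<noteq> 0" "b \<noteq> 0" using ab by auto
  have pairs: "periodic_pair a b x1 y1 x2 y2" "periodic_pair a b x1 y1 x3 y3"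
      "periodic_pair a b x2 y2 x3 y3"
    using tp three_periodic_stretch_iff[OF ab u] by auto
  obtain X Y where E: "trilinear_point (-1) 1 1 ?P1 ?P2 ?P3 = (X, Y)" by fastforce
  have nd: "non_degenerate ?P1 ?P2 ?P3" "non_degenerate ?P1 ?P3 ?P2"
    using tp non_degenerate_swap unfolding three_periodic_def by blast+
  \<comment> \<open>the excenter lies on the tangents at P2 and P3\<close>
  have "inner ((X, Y) - ?P2) (ell_normal a b ?P2) = 0"
    using tp nd(1) excenter_on_external_bisector E
    unfolding three_periodic_def normal_bisects_def by metis
  then have t2: "X / a * x2 + Y / b * y2 = 1"
    using u(2) by (subst (asm) inner_ellipse_normal_stretch[OF ab0]) simp
  have "trilinear_point (-1) 1 1 ?P1 ?P3 ?P2 = (X, Y)"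
    using E by (simp add: trilinear_point_swap[of "-1" 1 1 ?P1])
  moreover have "normal_bisects a b ?P3 ?P2 ?P1"
    using tp normal_bisects_swap unfolding three_periodic_def by blast
  ultimately have "inner ((X, Y) - ?P3) (ell_normal a b ?P3) = 0"
    using nd(2) excenter_on_external_bisector unfolding normal_bisects_def by metis
  then have t3: "X / a * x3 + Y / b * y3 = 1"
    using u(3) by (subst (asm) inner_ellipse_normal_stretch[OF ab0]) simp
  have w2: "(- 2 * x1 / q) * x2 + (- 2 * y1 / p) * y2 = 1"
    and w3: "(- 2 * x1 / q) * x3 + (- 2 * y1 / p) * y3 = 1"
    using pairs(1,2) pos by (simp_all add: periodic_pair_def p_def q_def field_simps)
  have cr: "x2 * y3 - y2 * x3 \<noteq> 0" using periodic_pair_cross_ne_0[OF ab u(2,3) pairs(3)] .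
  have "(X / a - (- 2 * x1 / q)) * (x2 * y3 - y2 * x3) = 0"
    "(Y / b - (- 2 * y1 / p)) * (x2 * y3 - y2 * x3) = 0"
    using t2 t3 w2 w3 by algebra+
  then have "X / a = - 2 * x1 / q" "Y / b = - 2 * y1 / p" using cr by auto
  then show ?thesis using E ab0 by (simp add: p_def q_def field_simps)
qed

section \<open>Every point of the loci is attained\<close>

text \<open>For s = 1 and s = -1 the two vertices completing (a x, b y) to a 3-periodic.\<close>

definition periodic_partner :: "real \<Rightarrow> real \<Rightarrow> real \<Rightarrow> real \<Rightarrow> real \<Rightarrow> pt" where
  "periodic_partner a b s x y =
     chord_point (conj_p a b * x) (conj_q a b * y) (- (conj_p a b * conj_q a b / 2))
       (s * sqrt ((conj_p a b * x)^2 + (conj_q a b * y)^2 - (conj_p a b * conj_q a b / 2)^2))"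

lemma periodic_partner_discriminant_pos:
  fixes x y :: real
  assumes ab: "0 < b" "b < a" and u: "x^2 + y^2 = 1"
  shows "(conj_p a b * conj_q a b / 2)^2 < (conj_p a b * x)^2 + (conj_q a b * y)^2"
proof -
  define p where "p = conj_p a b"
  define q where "q = conj_q a b"
  note pos = conj_pq_pos[OF ab, folded p_def q_def]
    and add = conj_p_add_q[OF ab, folded p_def q_def]
  have "4 * ((p * x)^2 + (q * y)^2 - (p * q / 2)^2) = p^2 * x^2 * (4 - q^2) + q^2 * y^2 * (4 - p^2)"
    using u by (simp add: power2_eq_square algebra_simps) algebra
  moreover have "q^2 < 2^2" "p^2 < 2^2"
    using pos add by (intro power_strict_mono; simp)+
  then have q4: "0 < 4 - q^2" and p4: "0 < 4 - p^2" by simp_all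
  have "0 < p^2 * x^2 * (4 - q^2) \<or> 0 < q^2 * y^2 * (4 - p^2)"
  proof (cases "x = 0")
    case True
    then have "y \<noteq> 0" using u by auto
    then show ?thesis using pos(2) p4 by simp
  qed (use pos(1) q4 in simp)
  moreover have "0 \<le> p^2 * x^2 * (4 - q^2)" "0 \<le> q^2 * y^2 * (4 - p^2)"
    using p4 q4 by simp_all
  ultimately have "0 < 4 * ((p * x)^2 + (q * y)^2 - (p * q / 2)^2)" by linarith
  then show ?thesis by (simp add: p_def q_def)
qed

lemma
  fixes x y s :: real
  assumes ab: "0 < b" "b < a" and u: "x^2 + y^2 = 1" and s: "s^2 = 1"
  shows periodic_partner_unit:
      "(fst (periodic_partner a b s x y))^2 + (snd (periodic_partner a b s x y))^2 = 1"
    and periodic_pair_partner: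
      "periodic_pair a b x y (fst (periodic_partner a b s x y)) (snd (periodic_partner a b s x y))"
proof -
  define p where "p = conj_p a b"
  define q where "q = conj_q a b"
  have disc: "(p * q / 2)^2 < (p * x)^2 + (q * y)^2"
    using periodic_partner_discriminant_pos[OF ab u] by (simp add: p_def q_def)
  then have N: "(p * x)^2 + (q * y)^2 \<noteq> 0" by (metis order_less_irrefl zero_le_power2 order_le_less_trans)
  show "(fst (periodic_partner a b s x y))^2 + (snd (periodic_partner a b s x y))^2 = 1"
    unfolding periodic_partner_def p_def[symmetric] q_def[symmetric]
    using disc s by (intro chord_point_on_circle N) (simp add: power_mult_distrib)
  show "periodic_pair a b x y (fst (periodic_partner a b s x y)) (snd (periodic_partner a b s x y))"
    using chord_point_on_line[OF N]
    unfolding periodic_pair_def periodic_partner_def p_def[symmetric] q_def[symmetric]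
    by (simp add: mult.assoc)
qed

lemma periodic_pair_partners:
  fixes x y :: real
  assumes ab: "0 < b" "b < a" and u: "x^2 + y^2 = 1"
  shows "periodic_pair a b (fst (periodic_partner a b 1 x y)) (snd (periodic_partner a b 1 x y))
    (fst (periodic_partner a b (-1) x y)) (snd (periodic_partner a b (-1) x y))"
proof -
  define p where "p = conj_p a b"
  define q where "q = conj_q a b"
  define r where "r = - (p * q / 2)"
  define N where "N = (p * x)^2 + (q * y)^2"
  define h where "h = sqrt (N - r^2)"
  note add = conj_p_add_q[OF ab, folded p_def q_def]
  have disc: "r^2 < N"
    using periodic_partner_discriminant_pos[OF ab u] by (simp add: p_def q_def r_def N_def)
  then have N0: "N \<noteq> 0" by (metis order_less_irrefl zero_le_power2 order_le_less_trans)
  have h2: "h^2 = N - r^2" using disc by (simp add: h_def)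
  have partners:
      "periodic_partner a b 1 x y = ((r * (p * x) - h * (q * y)) / N, (r * (q * y) + h * (p * x)) / N)"
      "periodic_partner a b (-1) x y = ((r * (p * x) + h * (q * y)) / N, (r * (q * y) - h * (p * x)) / N)"
    by (simp_all add: periodic_partner_def chord_point_def p_def q_def r_def N_def h_def)
  have prod: "p * (r * (p * x) - h * (q * y)) * (r * (p * x) + h * (q * y))
      + q * (r * (q * y) + h * (p * x)) * (r * (q * y) - h * (p * x)) = r * N^2"
    using u add h2 unfolding N_def r_def by algebra
  have "p * ((r * (p * x) - h * (q * y)) / N) * ((r * (p * x) + h * (q * y)) / N)
      + q * ((r * (q * y) + h * (p * x)) / N) * ((r * (q * y) - h * (p * x)) / N)
      = (p * (r * (p * x) - h * (q * y)) * (r * (p * x) + h * (q * y))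
      + q * (r * (q * y) + h * (p * x)) * (r * (q * y) - h * (p * x))) / N^2"
    using N0 by (simp add: field_simps power2_eq_square)
  also have "\<dots> = r" using N0 by (simp add: prod)
  finally show ?thesis
    unfolding periodic_pair_def partners p_def[symmetric] q_def[symmetric] r_def[symmetric] by simp
qed

lemma three_periodic_partners:
  fixes x y :: real
  assumes ab: "0 < b" "b < a" and u: "x^2 + y^2 = 1"
  shows "three_periodic a b (a * x, b * y)
    (a * fst (periodic_partner a b 1 x y), b * snd (periodic_partner a b 1 x y))
    (a * fst (periodic_partner a b (-1) x y), b * snd (periodic_partner a b (-1) x y))"
  using three_periodic_stretch_iff[OF ab u periodic_partner_unit[OF ab u] periodic_partner_unit[OF ab u]]
    periodic_pair_partner[OF ab u] periodic_pair_partners[OF ab u] by simp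

definition incenter_curve :: "real \<Rightarrow> real \<Rightarrow> real \<Rightarrow> pt" where
  "incenter_curve a b t = normals_meet a b (cos t) (sin t)
     (fst (periodic_partner a b 1 (cos t) (sin t))) (snd (periodic_partner a b 1 (cos t) (sin t)))"

lemma continuous_on_incenter_curve:
  assumes ab: "0 < b" "b < a"
  shows "continuous_on S (\<lambda>t. fst (incenter_curve a b t))"
proof -
  have u: "(cos t)^2 + (sin t)^2 = 1" for t :: real by (rule sin_cos_squared_add2)
  have N: "(conj_p a b * cos t)^2 + (conj_q a b * sin t)^2 \<noteq> 0" for t :: real
    using periodic_partner_discriminant_pos[OF ab u]
    by (metis order_less_irrefl zero_le_power2 order_le_less_trans)
  have partner: "continuous_on S (\<lambda>t. fst (periodic_partner a b 1 (cos t) (sin t)))"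
      "continuous_on S (\<lambda>t. snd (periodic_partner a b 1 (cos t) (sin t)))"
    unfolding periodic_partner_def chord_point_def fst_conv snd_conv
    by (intro continuous_intros ballI N)+
  have D: "cos t * snd (periodic_partner a b 1 (cos t) (sin t))
      - sin t * fst (periodic_partner a b 1 (cos t) (sin t)) \<noteq> 0" for t
    using periodic_pair_cross_ne_0[OF ab u periodic_partner_unit[OF ab u] periodic_pair_partner[OF ab u]]
    by simp
  show ?thesis
    unfolding incenter_curve_def normals_meet_def fst_conv
    by (intro continuous_intros partner) (use D ab in auto)
qed

lemma incenter_curve_endpoints:
  assumes ab: "0 < b" "b < a"
  shows "fst (incenter_curve a b 0) = - (conj_q a b * (a^2 - b^2) / (2 * a))"
    and "fst (incenter_curve a b pi) = conj_q a b * (a^2 - b^2) / (2 * a)"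
proof -
  define p where "p = conj_p a b"
  define q where "q = conj_q a b"
  note pos = conj_pq_pos[OF ab, folded p_def q_def]
  have h: "0 < sqrt (p^2 - (p * q / 2)^2)"
    using periodic_partner_discriminant_pos[OF ab, of 1 0] by (simp add: p_def q_def)
  show "fst (incenter_curve a b 0) = - (q * (a^2 - b^2) / (2 * a))"
    using h pos(1) ab
    by (simp add: incenter_curve_def normals_meet_def periodic_partner_def chord_point_def
        p_def[symmetric] q_def[symmetric] field_simps power2_eq_square)
  show "fst (incenter_curve a b pi) = q * (a^2 - b^2) / (2 * a)"
    using h pos(1) ab
    by (simp add: incenter_curve_def normals_meet_def periodic_partner_def chord_point_def
        p_def[symmetric] q_def[symmetric] field_simps power2_eq_square)
qed

lemma incenter_onto:
  assumes ab: "0 < b" "b < a"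
    and Z: "on_ellipse (conj_q a b * (a^2 - b^2) / (2 * a)) (conj_p a b * (a^2 - b^2) / (2 * b)) Z"
  shows "\<exists>P1 P2 P3. three_periodic a b P1 P2 P3 \<and> Z = incenter P1 P2 P3"
proof -
  define A where "A = conj_q a b * (a^2 - b^2) / (2 * a)"
  define B where "B = conj_p a b * (a^2 - b^2) / (2 * b)"
  obtain zx zy where Zxy: "Z = (zx, zy)" by fastforce
  note pos = conj_pq_pos[OF ab]
  have e: "0 < a^2 - b^2" using ab by (simp add: power_strict_mono)
  have A: "0 < A" and B: "0 < B" using pos e ab by (simp_all add: A_def B_def)
  have E: "zx^2 / A^2 + zy^2 / B^2 = 1" using Z by (simp add: on_ellipse_def Zxy A_def B_def)
  moreover have "0 \<le> zy^2 / B^2" by simp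
  ultimately have "zx^2 / A^2 \<le> 1" by linarith
  then have "zx^2 \<le> A^2" using A by (simp add: divide_le_eq)
  then have "\<bar>zx\<bar> \<le> A" using A abs_le_square_iff[of zx A] by simp
  then have "fst (incenter_curve a b 0) \<le> zx" "zx \<le> fst (incenter_curve a b pi)"
    using incenter_curve_endpoints[OF ab] by (simp_all add: A_def)
  then obtain t where t: "fst (incenter_curve a b t) = zx"
    using IVT'[OF _ _ pi_ge_zero continuous_on_incenter_curve[OF ab]] by blast
  define x where "x = cos t"
  define y where "y = sin t"
  define X2 where "X2 = fst (periodic_partner a b 1 x y)"
  define Y2 where "Y2 = snd (periodic_partner a b 1 x y)"
  define X3 where "X3 = fst (periodic_partner a b (-1) x y)"
  define Y3 where "Y3 = snd (periodic_partner a b (-1) x y)"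
  have u: "x^2 + y^2 = 1" "X2^2 + Y2^2 = 1" "X3^2 + Y3^2 = 1"
    using periodic_partner_unit[OF ab, of x y] by (simp_all add: x_def y_def X2_def Y2_def X3_def Y3_def)
  have tp: "three_periodic a b (a * x, b * y) (a * X2, b * Y2) (a * X3, b * Y3)"
    using three_periodic_partners[OF ab u(1)] by (simp add: X2_def Y2_def X3_def Y3_def)
  then have pairs: "periodic_pair a b x y X2 Y2" "periodic_pair a b x y X3 Y3" "periodic_pair a b X2 Y2 X3 Y3"
    using three_periodic_stretch_iff[OF ab u] by auto
  have "normals_meet a b x y X2 Y2 = incenter_curve a b t"
    by (simp add: incenter_curve_def x_def y_def X2_def Y2_def)
  then obtain w where nm: "normals_meet a b x y X2 Y2 = (zx, w)"
    using t by (cases "incenter_curve a b t") simp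
  have "on_ellipse A B (zx, w)"
    using normals_meet_on_ellipse[OF ab u(1,2) pairs(1)] nm by (simp add: A_def B_def)
  then have "zx^2 / A^2 + w^2 / B^2 = 1" by (simp add: on_ellipse_def)
  then have "w^2 / B^2 = zy^2 / B^2" using E by linarith
  then have "w = zy \<or> w = - zy" using B by (simp add: power2_eq_iff)
  then show ?thesis
  proof
    assume "w = zy"
    then have "incenter (a * x, b * y) (a * X2, b * Y2) (a * X3, b * Y3) = Z"
      using incenter_stretch[OF ab u tp] nm Zxy by simp
    then show ?thesis using tp by blast
  next
    assume w: "w = - zy"
    have u': "x^2 + (- y)^2 = 1" "X2^2 + (- Y2)^2 = 1" "X3^2 + (- Y3)^2 = 1" using u by simp_all
    have tp': "three_periodic a b (a * x, b * - y) (a * X2, b * - Y2) (a * X3, b * - Y3)"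
      using three_periodic_stretch_iff[OF ab u'] pairs by (simp add: periodic_pair_reflect)
    have "incenter (a * x, b * - y) (a * X2, b * - Y2) (a * X3, b * - Y3) = Z"
      using incenter_stretch[OF ab u' tp'] nm w Zxy by (simp add: normals_meet_reflect)
    then show ?thesis using tp' by blast
  qed
qed

lemma excenter_onto:
  assumes ab: "0 < b" "b < a" and Z: "on_ellipse (2 * a / conj_q a b) (2 * b / conj_p a b) Z"
  shows "\<exists>P1 P2 P3. three_periodic a b P1 P2 P3 \<and> Z = trilinear_point (-1) 1 1 P1 P2 P3"
proof -
  note pos = conj_pq_pos[OF ab]
  obtain zx zy where Zxy: "Z = (zx, zy)" by fastforce
  define x where "x = - (conj_q a b * zx / (2 * a))"
  define y where "y = - (conj_p a b * zy / (2 * b))"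
  have "zx^2 / (2 * a / conj_q a b)^2 = x^2" "zy^2 / (2 * b / conj_p a b)^2 = y^2"
    using ab pos by (simp_all add: x_def y_def power_divide power_mult_distrib)
  then have u: "x^2 + y^2 = 1" using Z by (simp add: on_ellipse_def Zxy)
  define P2 where "P2 = (a * fst (periodic_partner a b 1 x y), b * snd (periodic_partner a b 1 x y))"
  define P3 where "P3 = (a * fst (periodic_partner a b (-1) x y), b * snd (periodic_partner a b (-1) x y))"
  have tp: "three_periodic a b (a * x, b * y) P2 P3"
    unfolding P2_def P3_def by (rule three_periodic_partners[OF ab u])
  have "trilinear_point (-1) 1 1 (a * x, b * y) P2 P3 = (- 2 * a * x / conj_q a b, - 2 * b * y / conj_p a b)"
    using excenter_stretch[OF ab u periodic_partner_unit[OF ab u] periodic_partner_unit[OF ab u]] tp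
    by (simp add: P2_def P3_def)
  also have "\<dots> = Z" using ab pos by (simp add: Zxy x_def y_def)
  finally show ?thesis using tp by blast
qed

lemma incenter_locus:
  fixes a b :: real
  assumes ab: "0 < b" "b < a"
  shows "{incenter P1 P2 P3 | P1 P2 P3. three_periodic a b P1 P2 P3}
    = ellipse_set (conj_q a b * (a^2 - b^2) / (2 * a)) (conj_p a b * (a^2 - b^2) / (2 * b))"
proof (intro equalityI subsetI)
  fix Z assume "Z \<in> {incenter P1 P2 P3 | P1 P2 P3. three_periodic a b P1 P2 P3}"
  then obtain P1 P2 P3 where tp: "three_periodic a b P1 P2 P3" and Z: "Z = incenter P1 P2 P3" by blast
  obtain x1 y1 x2 y2 x3 y3 where P: "P1 = (a * x1, b * y1)" "P2 = (a * x2, b * y2)" "P3 = (a * x3, b * y3)"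
    and u: "x1^2 + y1^2 = 1" "x2^2 + y2^2 = 1" "x3^2 + y3^2 = 1"
    using three_periodic_obtain_stretch[OF ab tp] .
  have "periodic_pair a b x1 y1 x2 y2" using tp three_periodic_stretch_iff[OF ab u] by (simp add: P)
  then show "Z \<in> ellipse_set (conj_q a b * (a^2 - b^2) / (2 * a)) (conj_p a b * (a^2 - b^2) / (2 * b))"
    using normals_meet_on_ellipse[OF ab u(1,2)] incenter_stretch[OF ab u] tp
    by (simp add: ellipse_set_def Z P)
next
  fix Z assume "Z \<in> ellipse_set (conj_q a b * (a^2 - b^2) / (2 * a)) (conj_p a b * (a^2 - b^2) / (2 * b))"
  then have "on_ellipse (conj_q a b * (a^2 - b^2) / (2 * a)) (conj_p a b * (a^2 - b^2) / (2 * b)) Z"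
    by (simp add: ellipse_set_def)
  then obtain P1 P2 P3 where "three_periodic a b P1 P2 P3" "Z = incenter P1 P2 P3"
    using incenter_onto[OF ab] by blast
  then show "Z \<in> {incenter P1 P2 P3 | P1 P2 P3. three_periodic a b P1 P2 P3}" by blast
qed

lemma excenter_on_locus:
  assumes ab: "0 < b" "b < a" and tp: "three_periodic a b P1 P2 P3"
  shows "on_ellipse (2 * a / conj_q a b) (2 * b / conj_p a b) (trilinear_point (-1) 1 1 P1 P2 P3)"
proof -
  obtain x1 y1 x2 y2 x3 y3 where P: "P1 = (a * x1, b * y1)" "P2 = (a * x2, b * y2)" "P3 = (a * x3, b * y3)"
    and u: "x1^2 + y1^2 = 1" "x2^2 + y2^2 = 1" "x3^2 + y3^2 = 1"
    using three_periodic_obtain_stretch[OF ab tp] .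
  have "(- 2 * a * x1 / conj_q a b)^2 / (2 * a / conj_q a b)^2
      + (- 2 * b * y1 / conj_p a b)^2 / (2 * b / conj_p a b)^2 = x1^2 + y1^2"
    using ab conj_pq_pos[OF ab] by (simp add: power_divide power_mult_distrib)
  then show ?thesis
    using excenter_stretch[OF ab u] tp u(1) by (simp add: on_ellipse_def P)
qed

lemma excenter_locus:
  fixes a b :: real
  assumes ab: "0 < b" "b < a"
  shows "\<Union>{excenters P1 P2 P3 | P1 P2 P3. three_periodic a b P1 P2 P3}
    = ellipse_set (2 * a / conj_q a b) (2 * b / conj_p a b)"
proof (intro equalityI subsetI)
  fix Z assume "Z \<in> \<Union>{excenters P1 P2 P3 | P1 P2 P3. three_periodic a b P1 P2 P3}"
  then obtain P1 P2 P3 where tp: "three_periodic a b P1 P2 P3" and Z: "Z \<in> excenters P1 P2 P3" by blast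
  have "trilinear_point 1 (-1) 1 P1 P2 P3 = trilinear_point (-1) 1 1 P2 P3 P1"
    "trilinear_point 1 1 (-1) P1 P2 P3 = trilinear_point (-1) 1 1 P3 P1 P2"
    by (rule trilinear_point_rotate)
      (simp only: trilinear_point_rotate[of 1 1 "-1"] trilinear_point_rotate[of 1 "-1" 1])
  then have "Z = trilinear_point (-1) 1 1 P1 P2 P3 \<or> Z = trilinear_point (-1) 1 1 P2 P3 P1
      \<or> Z = trilinear_point (-1) 1 1 P3 P1 P2"
    using Z by (simp add: excenters_def)
  moreover have "three_periodic a b P2 P3 P1" "three_periodic a b P3 P1 P2"
    using three_periodic_rotate tp by blast+
  ultimately show "Z \<in> ellipse_set (2 * a / conj_q a b) (2 * b / conj_p a b)"
    unfolding ellipse_set_def using excenter_on_locus[OF ab] tp by blast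
next
  fix Z assume "Z \<in> ellipse_set (2 * a / conj_q a b) (2 * b / conj_p a b)"
  then have "on_ellipse (2 * a / conj_q a b) (2 * b / conj_p a b) Z" by (simp add: ellipse_set_def)
  then obtain P1 P2 P3 where "three_periodic a b P1 P2 P3" "Z = trilinear_point (-1) 1 1 P1 P2 P3"
    using excenter_onto[OF ab] by blast
  moreover from this(2) have "Z \<in> excenters P1 P2 P3" by (simp add: excenters_def)
  ultimately show "Z \<in> \<Union>{excenters P1 P2 P3 | P1 P2 P3. three_periodic a b P1 P2 P3}" by blast
qed

theorem theorem1:
  fixes a b :: real
  assumes "a > b" and "b > 0"
  defines "\<delta> \<equiv> sqrt (a^4 - a^2 * b^2 + b^4)"
  shows "({incenter P1 P2 P3 | P1 P2 P3. three_periodic a b P1 P2 P3}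
           = ellipse_set ((\<delta> - b^2) / a) ((a^2 - \<delta>) / b)) \<and>
         ((\<Union>{excenters P1 P2 P3 | P1 P2 P3. three_periodic a b P1 P2 P3})
           = ellipse_set ((b^2 + \<delta>) / a) ((a^2 + \<delta>) / b))"
proof -
  have ab: "0 < b" "b < a" using assms(1,2) by auto
  have \<delta>: "\<delta> = ell_delta a b" by (simp add: \<delta>_def ell_delta_def)
  show ?thesis
    unfolding \<delta> incenter_locus[OF ab] excenter_locus[OF ab] locus_semi_axes[OF ab] by simp
qed

end
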